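(* Let $U,V$ be Banach spaces with norms $\|\cdot\|_U,\|\cdot\|_V$, and for each $\varepsilon>0$ let $\bar u_\varepsilon\in U$ and $F_\varepsilon\in C^1(U;V)$ be given with $\|F_\varepsilon(\bar u_\varepsilon)\|_V\to0$ as $\varepsilon\to0$. Let $u_0\in U$ be such that there exist $\varepsilon_0>0$ and $c>0$ with: for all $\varepsilon\in(0,\varepsilon_0]$, $F'_\varepsilon(u_0)$ is Fredholm of index zero from $U$ into $V$ and $\|F'_\varepsilon(u_0)u\|_V\ge c\|u\|_U$ for all $u\in U$. Let $\|\cdot\|$ be another norm on $U$ such that (a) $d:=\sup\{\|u\|:\ u\in U,\ \|u\|_U\le1\}<\infty$; (b) $\|\bar u_\varepsilon-u_0\|\to0$ as $\varepsilon\to0$; (c) $\sup_{\|v\|_U\le1}\|(F'_\varepsilon(u_0+u)-F'_\varepsilon(u_0))v\|_V\to0$ as $\varepsilon+\|u\|\to0$. Then there exist $\varepsilon_1\in(0,\varepsilon_0]$ and $\delta>0$ such that for every $\varepsilon\in(0,\varepsilon_1]$ there is exactly one solution $u=u_\varepsilon$ of $F_\varepsilon(u)=0$ with $\|u-u_0\|\le\delta$, and $$\|u_\varepsilon-u_0\|\le\|\bar u_\varepsilon-u_0\|+\frac{3d}{c}\|F_\varepsilon(\bar u_\varepsilon)\|_V.$$ *)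

theory Defs
  imports "HOL-Analysis.Analysis"
begin

definition is_norm :: "('a::real_vector \<Rightarrow> real) \<Rightarrow> bool" where
  "is_norm N \<longleftrightarrow>
     (\<forall>x. 0 \<le> N x) \<and> (\<forall>x. N x = 0 \<longleftrightarrow> x = 0) \<and>
     (\<forall>x y. N (x + y) \<le> N x + N y) \<and> (\<forall>a x. N (a *\<^sub>R x) = \<bar>a\<bar> * N x)"

definition fredholm :: "('a::real_normed_vector \<Rightarrow> 'b::real_normed_vector) \<Rightarrow> bool" where
  "fredholm T \<longleftrightarrow> bounded_linear T \<and>
     (\<exists>K. finite K \<and> span K = {x. T x = 0}) \<and>
     closed (range T) \<and>
     (\<exists>C. finite C \<and> span (range T \<union> C) = UNIV)"

definition nullity :: "('a::real_normed_vector \<Rightarrow> 'b::real_normed_vector) \<Rightarrow> nat" where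
  "nullity T = dim {x. T x = 0}"

text \<open>Codimension of the range: dimension of the quotient V / range T, i.e. the
  least number of vectors which together with the range span the whole space.\<close>
definition codim_range :: "('a::real_normed_vector \<Rightarrow> 'b::real_normed_vector) \<Rightarrow> nat" where
  "codim_range T = (LEAST n. \<exists>C. finite C \<and> card C = n \<and> span (range T \<union> C) = UNIV)"

definition fredholm_index_zero :: "('a::real_normed_vector \<Rightarrow> 'b::real_normed_vector) \<Rightarrow> bool" where
  "fredholm_index_zero T \<longleftrightarrow> fredholm T \<and> int (nullity T) - int (codim_range T) = 0"

end

theory Submission
  imports Defs
begin

text \<open>For each fixed \<open>\<epsilon>\<close> this is a quasi-Newton argument around the approximate solution
  \<open>\<bar>u\<^sub>\<epsilon>\<close>. Injectivity and index zero make \<open>A = F'\<^sub>\<epsilon>(u\<^sub>0)\<close> invertible with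
  \<open>\<parallel>A\<^sup>-\<^sup>1\<parallel> \<le> 1/c\<close>. On the \<open>\<parallel>\<cdot>\<parallel>\<close>-ball of radius \<open>\<delta>\<close> around \<open>u\<^sub>0\<close>, hypothesis (c) keeps
  \<open>F'\<^sub>\<epsilon>\<close> within \<open>c/3\<close> of \<open>A\<close>, so by the mean value inequality \<open>F\<^sub>\<epsilon> - A\<close> is
  \<open>c/3\<close>-Lipschitz there. Hence \<open>u \<mapsto> u - A\<^sup>-\<^sup>1 F\<^sub>\<epsilon>(u)\<close> is a \<open>1/3\<close>-contraction; it maps
  the \<open>\<parallel>\<cdot>\<parallel>\<^sub>U\<close>-ball of radius \<open>3\<parallel>F\<^sub>\<epsilon>(\<bar>u\<^sub>\<epsilon>)\<parallel>/(2c)\<close> around \<open>\<bar>u\<^sub>\<epsilon>\<close> into itself, which by (a)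
  lies in the \<open>\<delta>\<close>-ball once \<open>\<epsilon>\<close> is small, and zeros in the \<open>\<delta>\<close>-ball are unique because
  \<open>c\<parallel>u - v\<parallel> \<le> \<parallel>A(u - v)\<parallel> \<le> (c/3)\<parallel>u - v\<parallel>\<close> for two of them.\<close>

lemma bounded_below_imp_inj:
  fixes T :: "'a::real_normed_vector \<Rightarrow>\<^sub>L 'b::real_normed_vector"
  assumes "\<And>u. c * norm u \<le> norm (T u)" and "c > 0"
  shows "inj (blinfun_apply T)"
proof (rule injI)
  fix x y assume "T x = T y"
  then have "c * norm (x - y) \<le> 0"
    using assms(1)[of "x - y"] by (simp add: blinfun.diff_right)
  with \<open>c > 0\<close> show "x = y"
    by (simp add: mult_le_0_iff)
qed

lemma fredholm_index_zero_inj_imp_surj: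
  fixes T :: "'a::real_normed_vector \<Rightarrow> 'b::real_normed_vector"
  assumes fz: "fredholm_index_zero T" and "inj T"
  shows "surj T"
proof -
  have lin: "linear T"
    using fz by (simp add: fredholm_index_zero_def fredholm_def bounded_linear.linear)
  then have ker: "{x. T x = 0} = {0}"
    using \<open>inj T\<close> by (auto simp: linear_injective_0 linear_0)
  have "nullity T = 0"
    unfolding nullity_def ker
    by (rule real_vector.dim_unique[of "{}"]) (auto simp: real_vector.dependent_def)
  with fz have "codim_range T = 0"
    by (simp add: fredholm_index_zero_def)
  moreover from fz obtain C where C: "finite C" "span (range T \<union> C) = UNIV"
    unfolding fredholm_index_zero_def fredholm_def by blast
  have "\<exists>C. finite C \<and> card C = codim_range T \<and> span (range T \<union> C) = UNIV"
    unfolding codim_range_def by (rule LeastI_ex) (use C in blast)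
  ultimately obtain C0 where "finite C0" "card C0 = 0" "span (range T \<union> C0) = UNIV"
    by auto
  then have "span (range T) = UNIV"
    by simp
  moreover have "span (range T) = range T"
    using lin by (simp add: linear_subspace_image subspace_UNIV)
  ultimately show ?thesis
    by simp
qed

lemma has_derivative_near_linear_bound:
  fixes f :: "'a::real_normed_vector \<Rightarrow> 'b::real_normed_vector"
  assumes "convex M"
    and deriv: "\<And>w. w \<in> M \<Longrightarrow> (f has_derivative blinfun_apply (f' w)) (at w)"
    and close: "\<And>w. w \<in> M \<Longrightarrow> norm (f' w - A) \<le> \<kappa>"
    and "x \<in> M" "y \<in> M"
  shows "norm (f x - f y - A (x - y)) \<le> \<kappa> * norm (x - y)"
proof -
  have "norm ((f x - A x) - (f y - A y)) \<le> \<kappa> * norm (x - y)"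
  proof (rule differentiable_bound[OF \<open>convex M\<close> _ _ \<open>x \<in> M\<close> \<open>y \<in> M\<close>])
    fix w assume "w \<in> M"
    have "((\<lambda>w. f w - A w) has_derivative (\<lambda>h. f' w h - A h)) (at w)"
      by (intro has_derivative_diff deriv[OF \<open>w \<in> M\<close>] bounded_linear_imp_has_derivative
          blinfun.bounded_linear_right)
    moreover have "(\<lambda>h. f' w h - A h) = blinfun_apply (f' w - A)"
      by (simp add: fun_eq_iff blinfun.diff_left)
    ultimately show "((\<lambda>w. f w - A w) has_derivative blinfun_apply (f' w - A)) (at w within M)"
      by (metis has_derivative_at_withinI)
    show "onorm (blinfun_apply (f' w - A)) \<le> \<kappa>"
      using close[OF \<open>w \<in> M\<close>] by (simp add: norm_blinfun.rep_eq)
  qed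
  then show ?thesis
    by (simp add: blinfun.diff_right algebra_simps)
qed

lemma zero_unique_if_near_linear:
  fixes f :: "'a::real_normed_vector \<Rightarrow> 'b::real_normed_vector"
  assumes below: "\<And>u. c * norm u \<le> norm (A u)" and "\<kappa> < c"
    and near: "\<And>x y. x \<in> M \<Longrightarrow> y \<in> M \<Longrightarrow> norm (f x - f y - A (x - y)) \<le> \<kappa> * norm (x - y)"
    and "x \<in> M" "y \<in> M" "f x = 0" "f y = 0"
  shows "x = y"
proof -
  have "c * norm (x - y) \<le> \<kappa> * norm (x - y)"
    using below[of "x - y"] near[OF \<open>x \<in> M\<close> \<open>y \<in> M\<close>] \<open>f x = 0\<close> \<open>f y = 0\<close> by simp
  then have "(c - \<kappa>) * norm (x - y) \<le> 0"
    by (simp add: left_diff_distrib)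
  with \<open>\<kappa> < c\<close> have "norm (x - y) \<le> 0"
    by (simp add: mult_le_0_iff)
  then show ?thesis
    by simp
qed

lemma zero_in_cball_if_near_linear:
  fixes f :: "'a::banach \<Rightarrow> 'b::real_normed_vector"
  assumes surj: "surj (blinfun_apply A)"
    and below: "\<And>u. c * norm u \<le> norm (A u)" and "0 \<le> \<kappa>" "\<kappa> < c"
    and near: "\<And>x y. x \<in> cball ub r \<Longrightarrow> y \<in> cball ub r \<Longrightarrow>
                 norm (f x - f y - A (x - y)) \<le> \<kappa> * norm (x - y)"
    and r: "r = norm (f ub) / (c - \<kappa>)"
  shows "\<exists>x\<in>cball ub r. f x = 0"
proof -
  define Ai where "Ai = inv (blinfun_apply A)"
  have A_Ai: "A (Ai y) = y" for y
    unfolding Ai_def by (rule surj_f_inv_f[OF surj])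
  have c: "c > 0"
    using assms(3,4) by simp
  have norm_Ai: "norm (Ai y) \<le> norm y / c" for y
    using below[of "Ai y"] c by (simp add: A_Ai field_simps)
  define G where "G x = x - Ai (f x)" for x
  have G_lipschitz: "dist (G x) (G y) \<le> \<kappa> / c * dist x y"
    if "x \<in> cball ub r" "y \<in> cball ub r" for x y
  proof -
    have "A (G x - G y) = - (f x - f y - A (x - y))"
      by (simp add: G_def blinfun.diff_right blinfun.add_right A_Ai algebra_simps)
    then have "c * norm (G x - G y) \<le> \<kappa> * norm (x - y)"
      using below[of "G x - G y"] near[OF that] by (metis norm_minus_cancel order_trans)
    with c show ?thesis
      by (simp add: dist_norm field_simps)
  qed
  have r_nonneg: "r \<ge> 0"
    using r assms(4) by simp
  have G_maps: "G ` cball ub r \<subseteq> cball ub r"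
  proof clarify
    fix x assume x: "x \<in> cball ub r"
    have "dist (G x) ub \<le> dist (G x) (G ub) + dist ub (G ub)"
      by (rule dist_triangle2)
    also have "\<dots> \<le> \<kappa> / c * r + norm (f ub) / c"
    proof (rule add_mono)
      have "dist (G x) (G ub) \<le> \<kappa> / c * dist x ub"
        using G_lipschitz x r_nonneg by simp
      also have "\<dots> \<le> \<kappa> / c * r"
        using x \<open>0 \<le> \<kappa>\<close> c by (intro mult_left_mono) (auto simp: dist_commute)
      finally show "dist (G x) (G ub) \<le> \<kappa> / c * r" .
      show "dist ub (G ub) \<le> norm (f ub) / c"
        using norm_Ai[of "f ub"] by (simp add: G_def dist_norm)
    qed
    also have "\<dots> = r"
      using r assms(4) c by (simp add: field_simps)
    finally show "G x \<in> cball ub r"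
      by (simp add: dist_commute)
  qed
  have "\<exists>!x\<in>cball ub r. G x = x"
    by (rule Banach_fix[where c = "\<kappa> / c"]) (use r_nonneg assms(3,4) c G_maps G_lipschitz in
        \<open>auto simp: complete_eq_closed\<close>)
  then obtain x where "x \<in> cball ub r" "G x = x"
    by blast
  then have "f x = 0"
    using A_Ai[of "f x"] by (simp add: G_def)
  with \<open>x \<in> cball ub r\<close> show ?thesis
    by blast
qed

lemma convex_is_norm_cball:
  assumes "is_norm N"
  shows "convex {w. N (w - a) \<le> \<delta>}"
proof (rule convexI, clarsimp)
  fix x y :: 'a and s t :: real
  assume x: "N (x - a) \<le> \<delta>" and y: "N (y - a) \<le> \<delta>" and "0 \<le> s" "0 \<le> t" "s + t = 1"
  have "s *\<^sub>R x + t *\<^sub>R y - a = s *\<^sub>R (x - a) + t *\<^sub>R (y - a)"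
    using \<open>s + t = 1\<close> by (simp add: algebra_simps flip: scaleR_add_left)
  then have "N (s *\<^sub>R x + t *\<^sub>R y - a) \<le> s * N (x - a) + t * N (y - a)"
    using assms \<open>0 \<le> s\<close> \<open>0 \<le> t\<close> unfolding is_norm_def by (metis abs_of_nonneg)
  also have "\<dots> \<le> s * \<delta> + t * \<delta>"
    using x y \<open>0 \<le> s\<close> \<open>0 \<le> t\<close> by (intro add_mono mult_left_mono)
  finally show "N (s *\<^sub>R x + t *\<^sub>R y - a) \<le> \<delta>"
    using \<open>s + t = 1\<close> by (simp flip: distrib_right)
qed

lemma is_norm_le_SUP_cball_mult_norm:
  fixes N :: "'a::real_normed_vector \<Rightarrow> real"
  assumes "is_norm N" and bdd: "bdd_above (N ` cball 0 1)"
  shows "N x \<le> (SUP u\<in>cball 0 1. N u) * norm x"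
proof (cases "x = 0")
  case True
  then show ?thesis
    using assms(1) unfolding is_norm_def by (metis mult_zero_right order_refl norm_zero)
next
  case False
  then have "norm x > 0"
    by simp
  have "N ((1 / norm x) *\<^sub>R x) \<le> (SUP u\<in>cball 0 1. N u)"
    by (rule cSUP_upper[OF _ bdd]) simp
  moreover have "N ((1 / norm x) *\<^sub>R x) = N x / norm x"
    using assms(1) by (simp add: is_norm_def)
  ultimately show ?thesis
    using \<open>norm x > 0\<close> by (simp add: field_simps)
qed

lemma is_norm_SUP_cball_nonneg:
  fixes N :: "'a::real_normed_vector \<Rightarrow> real"
  assumes "is_norm N" and "bdd_above (N ` cball 0 1)"
  shows "0 \<le> (SUP u\<in>cball 0 1. N u)"
proof -
  have "N 0 \<le> (SUP u\<in>cball 0 1. N u)"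
    by (rule cSUP_upper[OF _ assms(2)]) simp
  with assms(1) show ?thesis
    unfolding is_norm_def by (metis order_trans)
qed

lemma unique_zero_near_approximate_zero:
  fixes f :: "'u::banach \<Rightarrow> 'v::banach"
  assumes deriv: "\<And>u. (f has_derivative blinfun_apply (f' u)) (at u)"
    and fred: "fredholm_index_zero (blinfun_apply A)"
    and below: "\<And>u. c * norm u \<le> norm (A u)" and "c > 0"
    and "is_norm N" and N_le: "\<And>x. N x \<le> d * norm x" and "d \<ge> 0"
    and close: "\<And>w. N (w - u0) \<le> \<delta> \<Longrightarrow> norm (f' w - A) \<le> c / 3"
    and small: "N (ub - u0) + 3 * d / c * norm (f ub) \<le> \<delta>"
  shows "(\<exists>!u. f u = 0 \<and> N (u - u0) \<le> \<delta>) \<and>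
         (\<forall>u. f u = 0 \<and> N (u - u0) \<le> \<delta> \<longrightarrow> N (u - u0) \<le> N (ub - u0) + 3 * d / c * norm (f ub))"
proof -
  define M where "M = {w. N (w - u0) \<le> \<delta>}"
  define r where "r = norm (f ub) / (c - c / 3)"
  have near: "norm (f x - f y - A (x - y)) \<le> c / 3 * norm (x - y)" if "x \<in> M" "y \<in> M" for x y
    using has_derivative_near_linear_bound[OF convex_is_norm_cball[OF \<open>is_norm N\<close>] deriv close]
      that unfolding M_def by blast
  have cball_bound: "N (w - u0) \<le> N (ub - u0) + 3 * d / c * norm (f ub)" if "w \<in> cball ub r" for w
  proof -
    have "N (w - u0) \<le> N (w - ub) + N (ub - u0)"
      using \<open>is_norm N\<close> unfolding is_norm_def by (metis diff_add_cancel add_diff_eq)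
    also have "N (w - ub) \<le> d * r"
    proof -
      have "norm (w - ub) \<le> r"
        using that by (simp add: dist_norm norm_minus_commute)
      then show ?thesis
        using N_le[of "w - ub"] \<open>d \<ge> 0\<close> by (meson mult_left_mono order_trans)
    qed
    also have "d * r \<le> 3 * d / c * norm (f ub)"
      using \<open>c > 0\<close> \<open>d \<ge> 0\<close> by (simp add: r_def field_simps)
    finally show ?thesis
      by simp
  qed
  then have "cball ub r \<subseteq> M"
    using small unfolding M_def by force
  have surj: "surj (blinfun_apply A)"
    using fredholm_index_zero_inj_imp_surj[OF fred bounded_below_imp_inj[OF below \<open>c > 0\<close>]] .
  have near_cball: "norm (f x - f y - A (x - y)) \<le> c / 3 * norm (x - y)"
    if "x \<in> cball ub r" "y \<in> cball ub r" for x y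
    using near that \<open>cball ub r \<subseteq> M\<close> by blast
  have "\<exists>x\<in>cball ub r. f x = 0"
    using zero_in_cball_if_near_linear[OF surj below _ _ near_cball] \<open>c > 0\<close> by (simp add: r_def)
  then obtain x where "x \<in> cball ub r" "f x = 0"
    by blast
  have unique: "y = x" if "y \<in> M" "x \<in> M" "f y = 0" "f x = 0" for y
    using zero_unique_if_near_linear[OF below _ near] that \<open>c > 0\<close> by simp
  show ?thesis
    using \<open>x \<in> cball ub r\<close> \<open>f x = 0\<close> \<open>cball ub r \<subseteq> M\<close> unique cball_bound
    unfolding M_def by blast
qed

theorem corollary2p3:
  fixes F :: "real \<Rightarrow> 'u::banach \<Rightarrow> 'v::banach"
    and F' :: "real \<Rightarrow> 'u \<Rightarrow> ('u \<Rightarrow>\<^sub>L 'v)"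
    and ubar :: "real \<Rightarrow> 'u"
    and u0 :: 'u
    and N :: "'u \<Rightarrow> real"
    and \<epsilon>0 c d :: real
  assumes C1_deriv: "\<And>\<epsilon> u. \<epsilon> > 0 \<Longrightarrow> (F \<epsilon> has_derivative blinfun_apply (F' \<epsilon> u)) (at u)"
    and C1_cont: "\<And>\<epsilon>. \<epsilon> > 0 \<Longrightarrow> continuous_on UNIV (F' \<epsilon>)"
    and residual: "((\<lambda>\<epsilon>. norm (F \<epsilon> (ubar \<epsilon>))) \<longlongrightarrow> 0) (at_right 0)"
    and \<epsilon>0_pos: "\<epsilon>0 > 0" and c_pos: "c > 0"
    and fred: "\<And>\<epsilon>. 0 < \<epsilon> \<Longrightarrow> \<epsilon> \<le> \<epsilon>0 \<Longrightarrow> fredholm_index_zero (blinfun_apply (F' \<epsilon> u0))"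
    and lower: "\<And>\<epsilon> u. 0 < \<epsilon> \<Longrightarrow> \<epsilon> \<le> \<epsilon>0 \<Longrightarrow> norm (F' \<epsilon> u0 u) \<ge> c * norm u"
    and N_norm: "is_norm N"
    and d_finite: "bdd_above (N ` cball 0 1)"
    and d_def: "d = (SUP u\<in>cball 0 1. N u)"
    and ubar_conv: "((\<lambda>\<epsilon>. N (ubar \<epsilon> - u0)) \<longlongrightarrow> 0) (at_right 0)"
    and deriv_cont: "\<And>\<eta>. \<eta> > 0 \<Longrightarrow> \<exists>\<rho>>0. \<forall>\<epsilon> u. 0 < \<epsilon> \<and> \<epsilon> + N u < \<rho> \<longrightarrow>
                        norm (F' \<epsilon> (u0 + u) - F' \<epsilon> u0) < \<eta>"
  shows "\<exists>\<epsilon>1 \<delta>. 0 < \<epsilon>1 \<and> \<epsilon>1 \<le> \<epsilon>0 \<and> \<delta> > 0 \<and>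
           (\<forall>\<epsilon>. 0 < \<epsilon> \<and> \<epsilon> \<le> \<epsilon>1 \<longrightarrow>
              (\<exists>!u. F \<epsilon> u = 0 \<and> N (u - u0) \<le> \<delta>) \<and>
              (\<forall>u. F \<epsilon> u = 0 \<and> N (u - u0) \<le> \<delta> \<longrightarrow>
                 N (u - u0) \<le> N (ubar \<epsilon> - u0) + 3 * d / c * norm (F \<epsilon> (ubar \<epsilon>))))"
proof -
  have "d \<ge> 0" and N_le: "\<And>x. N x \<le> d * norm x"
    using is_norm_SUP_cball_nonneg is_norm_le_SUP_cball_mult_norm N_norm d_finite
    unfolding d_def by blast+
  obtain \<rho> where "\<rho> > 0" and \<rho>: "\<And>\<epsilon> u. 0 < \<epsilon> \<Longrightarrow> \<epsilon> + N u < \<rho> \<Longrightarrow> norm (F' \<epsilon> (u0 + u) - F' \<epsilon> u0) < c / 3"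
    using deriv_cont[of "c / 3"] c_pos by auto
  define \<delta> where "\<delta> = \<rho> / 2"
  have "((\<lambda>\<epsilon>. N (ubar \<epsilon> - u0) + 3 * d / c * norm (F \<epsilon> (ubar \<epsilon>))) \<longlongrightarrow> 0) (at_right 0)"
    using tendsto_add[OF ubar_conv tendsto_mult_right_zero[OF residual, of "3 * d / c"]]
    by (simp only: add.right_neutral)
  then have "\<forall>\<^sub>F \<epsilon> in at_right 0. N (ubar \<epsilon> - u0) + 3 * d / c * norm (F \<epsilon> (ubar \<epsilon>)) < \<delta>"
    using \<open>\<rho> > 0\<close> by (intro order_tendstoD(2)) (auto simp: \<delta>_def)
  then obtain b where "b > 0" and small: "\<And>\<epsilon>. 0 < \<epsilon> \<Longrightarrow> \<epsilon> < b \<Longrightarrow>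
      N (ubar \<epsilon> - u0) + 3 * d / c * norm (F \<epsilon> (ubar \<epsilon>)) < \<delta>"
    unfolding eventually_at_right_field by auto
  define \<epsilon>1 where "\<epsilon>1 = min \<epsilon>0 (min (b / 2) (\<delta> / 2))"
  have "\<And>\<epsilon>. 0 < \<epsilon> \<and> \<epsilon> \<le> \<epsilon>1 \<Longrightarrow>
      (\<exists>!u. F \<epsilon> u = 0 \<and> N (u - u0) \<le> \<delta>) \<and>
      (\<forall>u. F \<epsilon> u = 0 \<and> N (u - u0) \<le> \<delta> \<longrightarrow>
         N (u - u0) \<le> N (ubar \<epsilon> - u0) + 3 * d / c * norm (F \<epsilon> (ubar \<epsilon>)))"
  proof (rule unique_zero_near_approximate_zero[OF C1_deriv fred lower c_pos N_norm N_le \<open>d \<ge> 0\<close>])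
    fix \<epsilon> w assume \<epsilon>: "0 < \<epsilon> \<and> \<epsilon> \<le> \<epsilon>1" and "N (w - u0) \<le> \<delta>"
    then have "\<epsilon> + N (w - u0) < \<rho>"
      using \<open>\<rho> > 0\<close> by (auto simp: \<epsilon>1_def \<delta>_def)
    then show "norm (F' \<epsilon> w - F' \<epsilon> u0) \<le> c / 3"
      using \<rho>[of \<epsilon> "w - u0"] \<epsilon> by simp
  qed (use small \<open>b > 0\<close> in \<open>auto simp: \<epsilon>1_def less_imp_le\<close>)
  moreover have "0 < \<epsilon>1" "\<epsilon>1 \<le> \<epsilon>0" "\<delta> > 0"
    using \<epsilon>0_pos \<open>b > 0\<close> \<open>\<rho> > 0\<close> by (auto simp: \<epsilon>1_def \<delta>_def)
  ultimately show ?thesis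
    by blast
qed

end
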